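(* For $\alpha,\beta,\gamma>0$, $n\ge2$ and every $\bar\rho\in\mathcal{GS}_n$, $$\bar w(\bar\rho)=\operatorname{sgn}(\bar\rho)\sum_{\theta\in\{0,1\}^2}C_\theta\prod_{x\in\mathbb{M}_n}K_\theta(x,\bar\rho(x)),\qquad C_\theta=\tfrac12(-1)^{(\theta_1+n+1)(\theta_2+n+1)}.$$
   Context: $\mathbb{T}_n=(\mathbb{Z}/n\mathbb{Z})^2$, $e^1=(1,0)$, $e^2=(0,1)$, $e^3=\frac12(e^1+e^2)$; mid-edges $\mathbb{M}_n$ = black $\{v+\frac12e^1\}$ ⊔ white $\{v+\frac12e^2\}$, $v\in\mathbb{T}_n$, coordinates mod $n$. A generalised snake configuration is a permutation $\bar\rho$ of $\mathbb{M}_n$ with $\bar\rho(x)\in\{x,x+e^3,x+e^1\}$ ($x$ black), $\bar\rho(x)\in\{x,x+e^3,x+e^2\}$ ($x$ white); $\mathcal{GS}_n$ their set. $S(\bar\rho)$ = number of crossings (vertices $v$ with $\bar\rho(v-\frac12e^1)=v+\frac12e^1$ and $\bar\rho(v-\frac12e^2)=v+\frac12e^2$); $A,B,C$ = numbers of $x$ with $\bar\rho(x)=x+e^1$, $x+e^2$, $x+e^3$. Weight $\bar w(\bar\rho)=(-1)^{S(\bar\rho)}\alpha^{A(\bar\rho)}\beta^{B(\bar\rho)}\gamma^{C(\bar\rho)}$. For $\theta\in\{0,1\}^2$, $K_\theta:\mathbb{M}_n\times\mathbb{M}_n\to\mathbb{C}$: $K_\theta(x,x)=1$; $K_\theta(x,x+e^1)=\alpha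 e^{\pi i\theta_1/n}$ ($x$ black); $K_\theta(x,x+e^2)=\beta e^{\pi i\theta_2/n}$ ($x$ white); $K_\theta(x,x+e^3)=\gamma e^{\pi i(\theta_1+\theta_2)/(2n)}$; $0$ otherwise. *)

theory Defs
  imports "HOL-Analysis.Analysis" "HOL-Combinatorics.Permutations"
begin

text \<open>A mid-edge of the torus T_n is encoded as (b, i, j) with i, j in {0..<n}
  (coordinates mod n). If b = True it is the black mid-edge v + e1/2, otherwise
  the white mid-edge v + e2/2, where v = (i, j).\<close>

type_synonym medge = "bool \<times> nat \<times> nat"

definition Mn :: "nat \<Rightarrow> medge set" where
  "Mn n = UNIV \<times> {0..<n} \<times> {0..<n}"

definition is_black :: "medge \<Rightarrow> bool" where
  "is_black x = fst x"

fun plus_e1 :: "nat \<Rightarrow> medge \<Rightarrow> medge" where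
  "plus_e1 n (b, i, j) = (b, (i + 1) mod n, j)"

fun plus_e2 :: "nat \<Rightarrow> medge \<Rightarrow> medge" where
  "plus_e2 n (b, i, j) = (b, i, (j + 1) mod n)"

text \<open>(v + e1/2) + e3 = (v + e1) + e2/2 ; (v + e2/2) + e3 = (v + e2) + e1/2.\<close>
fun plus_e3 :: "nat \<Rightarrow> medge \<Rightarrow> medge" where
  "plus_e3 n (b, i, j) =
     (if b then (False, (i + 1) mod n, j) else (True, i, (j + 1) mod n))"

definition GS :: "nat \<Rightarrow> (medge \<Rightarrow> medge) set" where
  "GS n = {\<rho>. \<rho> permutes Mn n \<and>
     (\<forall>x \<in> Mn n. if is_black x then \<rho> x \<in> {x, plus_e3 n x, plus_e1 n x}
                                  else \<rho> x \<in> {x, plus_e3 n x, plus_e2 n x})}"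

text \<open>Crossings: vertices v with rho(v - e1/2) = v + e1/2 and rho(v - e2/2) = v + e2/2.\<close>
definition crossings :: "nat \<Rightarrow> (medge \<Rightarrow> medge) \<Rightarrow> nat" where
  "crossings n \<rho> = card {(i, j) \<in> {0..<n} \<times> {0..<n}.
      \<rho> (True, (i + n - 1) mod n, j) = (True, i, j) \<and>
      \<rho> (False, i, (j + n - 1) mod n) = (False, i, j)}"

definition cntA :: "nat \<Rightarrow> (medge \<Rightarrow> medge) \<Rightarrow> nat" where
  "cntA n \<rho> = card {x \<in> Mn n. \<rho> x = plus_e1 n x}"

definition cntB :: "nat \<Rightarrow> (medge \<Rightarrow> medge) \<Rightarrow> nat" where
  "cntB n \<rho> = card {x \<in> Mn n. \<rho> x = plus_e2 n x}"

definition cntC :: "nat \<Rightarrow> (medge \<Rightarrow> medge) \<Rightarrow> nat" where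
  "cntC n \<rho> = card {x \<in> Mn n. \<rho> x = plus_e3 n x}"

definition weight :: "real \<Rightarrow> real \<Rightarrow> real \<Rightarrow> nat \<Rightarrow> (medge \<Rightarrow> medge) \<Rightarrow> real" where
  "weight \<alpha> \<beta> \<gamma> n \<rho> = (-1) ^ crossings n \<rho> * \<alpha> ^ cntA n \<rho> * \<beta> ^ cntB n \<rho> * \<gamma> ^ cntC n \<rho>"

definition Kth :: "real \<Rightarrow> real \<Rightarrow> real \<Rightarrow> nat \<Rightarrow> nat \<times> nat \<Rightarrow> medge \<Rightarrow> medge \<Rightarrow> complex" where
  "Kth \<alpha> \<beta> \<gamma> n \<theta> x y =
     (if y = x then 1
      else if is_black x \<and> y = plus_e1 n x then
        complex_of_real \<alpha> * exp (complex_of_real pi * \<i> * of_nat (fst \<theta>) / of_nat n)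
      else if \<not> is_black x \<and> y = plus_e2 n x then
        complex_of_real \<beta> * exp (complex_of_real pi * \<i> * of_nat (snd \<theta>) / of_nat n)
      else if y = plus_e3 n x then
        complex_of_real \<gamma> * exp (complex_of_real pi * \<i> * of_nat (fst \<theta> + snd \<theta>) / (2 * of_nat n))
      else 0)"

definition Cth :: "nat \<Rightarrow> nat \<times> nat \<Rightarrow> complex" where
  "Cth n \<theta> = (1/2) * (-1) ^ ((fst \<theta> + n + 1) * (snd \<theta> + n + 1))"

end

theory Submission
  imports Defs "HOL-Number_Theory.Cong"
begin

text \<open>The sign of \<open>\<rho>\<close> is read off from its inversions for the order of the mid-edges by
  diagonal \<open>i + j\<close> and then by position along the diagonal. Every non-trivial step of \<open>\<rho>\<close>
  goes to the next diagonal, so each diagonal carries the same number \<open>m\<close> of moved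
  mid-edges. Pairs on different diagonals are inverted exactly when the later one leaves the
  last diagonal, which gives \<open>(n - 1) m\<^sup>2\<close> inversions. On a common diagonal the inversions
  are the crossings off the seam \<open>i = 0\<close>, together with the pairs formed by each of the \<open>W\<close>
  steps across the seam \<open>i = n - 1\<close> and the other moved mid-edges of its diagonal, except
  for those at crossings on the seam. Hence \<open>sgn \<rho> = (-1)^(S + W (m - 1) + (n - 1) m\<^sup>2)\<close>.

  Summing the positions along the diagonals gives \<open>2 A + C = 2 n W\<close>, and so
  \<open>2 B + C = 2 n (m - W)\<close>. Therefore the product of the twisted weights \<open>K\<^sub>\<theta>\<close> is the
  untwisted monomial times \<open>(-1)^(\<theta>\<^sub>1 W + \<theta>\<^sub>2 (m - W))\<close>, and the combination with the
  coefficients \<open>C\<^sub>\<theta>\<close> produces exactly the sign that turns \<open>sgn \<rho>\<close> into \<open>(-1)^S\<close>.\<close>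

section \<open>Sign of a permutation by inversions\<close>

definition ordered_pairs :: "('a \<Rightarrow> nat) \<Rightarrow> 'a set \<Rightarrow> ('a \<times> 'a) set" where
  "ordered_pairs key A = {(x, y) \<in> A \<times> A. key x < key y}"

definition inversions :: "('a \<Rightarrow> nat) \<Rightarrow> 'a set \<Rightarrow> ('a \<Rightarrow> 'a) \<Rightarrow> ('a \<times> 'a) set" where
  "inversions key A p = {(x, y) \<in> ordered_pairs key A. key (p y) < key (p x)}"

definition pair_sign :: "('a \<Rightarrow> nat) \<Rightarrow> ('a \<Rightarrow> 'a) \<Rightarrow> 'a \<times> 'a \<Rightarrow> int" where
  "pair_sign key p z =
     (if (key (fst z) < key (snd z)) = (key (p (fst z)) < key (p (snd z))) then 1 else -1)"

lemma finite_ordered_pairs: "finite A \<Longrightarrow> finite (ordered_pairs key A)"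
  unfolding ordered_pairs_def by (rule finite_subset[of _ "A \<times> A"]) auto

lemma inversions_parity_eq_prod_pair_sign:
  assumes "finite A" "inj_on key A" "p permutes A"
  shows "(-1::int) ^ card (inversions key A p) = (\<Prod>z\<in>ordered_pairs key A. pair_sign key p z)"
proof -
  have "pair_sign key p z = (if z \<in> inversions key A p then -1 else 1)"
    if z_in: "z \<in> ordered_pairs key A" for z
  proof -
    obtain x y where z: "z = (x, y)" "x \<in> A" "y \<in> A" "key x < key y"
      using z_in unfolding ordered_pairs_def by (cases z) auto
    then have "p x \<in> A" "p y \<in> A" "p x \<noteq> p y"
      using assms(3) by (auto simp: permutes_in_image permutes_inj[THEN inj_eq])
    then have "key (p x) \<noteq> key (p y)" using assms(2) by (auto dest: inj_onD)
    then show ?thesis using z unfolding pair_sign_def inversions_def ordered_pairs_def by auto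
  qed
  then have "(\<Prod>z\<in>ordered_pairs key A. pair_sign key p z)
      = (\<Prod>z\<in>ordered_pairs key A. if z \<in> inversions key A p then -1 else 1)"
    by (rule prod.cong[OF refl])
  also have "\<dots> = (-1) ^ card (ordered_pairs key A \<inter> {z. z \<in> inversions key A p})"
    using finite_ordered_pairs[OF assms(1)] by (simp add: prod.If_cases)
  also have "ordered_pairs key A \<inter> {z. z \<in> inversions key A p} = inversions key A p"
    by (auto simp: inversions_def)
  finally show ?thesis by simp
qed

lemma pair_sign_comp:
  "pair_sign key (p \<circ> q) (x, y) = pair_sign key q (x, y) * pair_sign key p (q x, q y)"
  unfolding pair_sign_def by auto

lemma pair_sign_swap:
  assumes "key u \<noteq> key v" "key (p u) \<noteq> key (p v)"
  shows "pair_sign key p (v, u) = pair_sign key p (u, v)"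
  using assms unfolding pair_sign_def by auto

text \<open>Reindexing by the involution that sends an ordered pair to its image under \<open>q\<close>,
  reordered, shows that the pair signs of \<open>p\<close> are multiplicative.\<close>
lemma prod_pair_sign_comp:
  assumes "finite A" "inj_on key A" "p permutes A" "q permutes A"
  shows "(\<Prod>z\<in>ordered_pairs key A. pair_sign key (p \<circ> q) z)
       = (\<Prod>z\<in>ordered_pairs key A. pair_sign key q z) * (\<Prod>z\<in>ordered_pairs key A. pair_sign key p z)"
proof -
  let ?P = "ordered_pairs key A"
  define \<Phi> where "\<Phi> = (\<lambda>(x, y). if key (q x) < key (q y) then (q x, q y) else (q y, q x))"
  have key_eq: "key x = key y \<longleftrightarrow> x = y" if "x \<in> A" "y \<in> A" for x y
    using assms(2) that by (auto dest: inj_onD)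
  have q_in: "q x \<in> A \<longleftrightarrow> x \<in> A" and p_in: "p x \<in> A \<longleftrightarrow> x \<in> A" for x
    using assms(3,4) by (simp_all add: permutes_in_image)
  have q_eq: "q x = q y \<longleftrightarrow> x = y" and p_eq: "p x = p y \<longleftrightarrow> x = y" for x y
    using assms(3,4) by (simp_all add: permutes_inj[THEN inj_eq])
  have "\<Phi> ` ?P \<subseteq> ?P"
  proof
    fix z assume "z \<in> \<Phi> ` ?P"
    then obtain x y where "(x, y) \<in> ?P" "z = \<Phi> (x, y)" by auto
    then have "q x \<in> A" "q y \<in> A" "key (q x) \<noteq> key (q y)" "z = \<Phi> (x, y)"
      using q_in q_eq key_eq unfolding ordered_pairs_def by auto
    then show "z \<in> ?P" unfolding \<Phi>_def ordered_pairs_def by (auto simp: linorder_neq_iff)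
  qed
  moreover have inj: "inj_on \<Phi> ?P"
    by (auto simp: inj_on_def \<Phi>_def ordered_pairs_def q_eq split: if_splits)
  ultimately have "\<Phi> ` ?P = ?P"
    using finite_ordered_pairs[OF assms(1)] by (simp add: endo_inj_surj)
  then have "(\<Prod>z\<in>?P. pair_sign key p z) = (\<Prod>z\<in>?P. pair_sign key p (\<Phi> z))"
    using prod.reindex[OF inj] by simp
  also have "\<dots> = (\<Prod>z\<in>?P. pair_sign key p (q (fst z), q (snd z)))"
  proof (rule prod.cong[OF refl])
    fix z assume "z \<in> ?P"
    then obtain x y where "z = (x, y)" "x \<in> A" "y \<in> A" "x \<noteq> y"
      unfolding ordered_pairs_def by auto
    then show "pair_sign key p (\<Phi> z) = pair_sign key p (q (fst z), q (snd z))"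
      using pair_sign_swap[of key "q x" "q y" p] key_eq q_in p_in q_eq p_eq
      by (auto simp: \<Phi>_def)
  qed
  finally have "(\<Prod>z\<in>?P. pair_sign key p z) = (\<Prod>z\<in>?P. pair_sign key p (q (fst z), q (snd z)))" .
  moreover have "(\<Prod>z\<in>?P. pair_sign key (p \<circ> q) z)
      = (\<Prod>z\<in>?P. pair_sign key q z) * (\<Prod>z\<in>?P. pair_sign key p (q (fst z), q (snd z)))"
    by (subst prod.distrib[symmetric], rule prod.cong) (auto simp: pair_sign_comp[symmetric])
  ultimately show ?thesis by simp
qed

text \<open>For \<open>key a < key b\<close> the inversions of the transposition are \<open>(a, b)\<close> together with
  \<open>(a, x)\<close> and \<open>(x, b)\<close> for every \<open>x\<close> strictly between them.\<close>
lemma odd_card_inversions_transpose_ordered: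
  assumes "inj_on key A" "a \<in> A" "b \<in> A" "key a < key b"
  shows "odd (card (inversions key A (Transposition.transpose a b)))"
proof -
  define M where "M = {x \<in> A. key a < key x \<and> key x < key b}"
  have "inversions key A (Transposition.transpose a b) = insert (a, b) (Pair a ` M \<union> (\<lambda>x. (x, b)) ` M)"
    using assms by (auto simp: inversions_def ordered_pairs_def M_def Transposition.transpose_def
        inj_on_eq_iff split: if_splits)
  moreover have "finite M"
    by (rule finite_subset[OF _ finite_vimage_IntI[OF finite_lessThan assms(1)]]) (auto simp: M_def)
  moreover have "card (Pair a ` M) = card M" "card ((\<lambda>x. (x, b)) ` M) = card M"
    by (auto intro!: card_image simp: inj_on_def)
  moreover have "Pair a ` M \<inter> (\<lambda>x. (x, b)) ` M = {}" "(a, b) \<notin> Pair a ` M \<union> (\<lambda>x. (x, b)) ` M"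
    by (auto simp: M_def)
  ultimately show ?thesis by (simp add: card_Un_disjoint)
qed

lemma odd_card_inversions_transpose:
  assumes "inj_on key A" "a \<in> A" "b \<in> A" "a \<noteq> b"
  shows "odd (card (inversions key A (Transposition.transpose a b)))"
proof -
  have "key a \<noteq> key b" using assms by (auto dest: inj_onD)
  then show ?thesis
    using odd_card_inversions_transpose_ordered[OF assms(1,2,3)]
      odd_card_inversions_transpose_ordered[OF assms(1,3,2)]
    by (auto simp: Transposition.transpose_commute linorder_neq_iff)
qed

theorem sign_eq_inversions:
  assumes "finite A" "inj_on key A" "p permutes A"
  shows "sign p = (-1::int) ^ card (inversions key A p)"
  using assms(3,1)
proof (induction rule: permutes_induct)
  case id
  have "inversions key A (\<lambda>x. x) = {}" by (auto simp: inversions_def ordered_pairs_def)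
  then show ?case by simp
next
  case (swap a b p)
  let ?t = "Transposition.transpose a b"
  have t: "?t permutes A" using swap by (simp add: permutes_swap_id)
  have "(-1::int) ^ card (inversions key A (?t \<circ> p))
      = (-1) ^ card (inversions key A p) * (-1) ^ card (inversions key A ?t)"
    using prod_pair_sign_comp[OF assms(1,2) t swap(4)]
    by (simp add: inversions_parity_eq_prod_pair_sign assms(1,2) t swap(4)
        permutes_compose[OF swap(4) t])
  also have "\<dots> = - sign p"
    using swap odd_card_inversions_transpose[OF assms(2) swap(1,2,3)] by (simp add: neg_one_odd_power)
  also have "\<dots> = sign (?t \<circ> p)"
    using swap assms(1) by (simp add: sign_compose permutation_swap_id permutes_imp_permutation sign_swap_id)
  finally show ?case by (rule sym)
qed


section \<open>Diagonals of the torus\<close>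

lemma add_mod_cancel_left_nat:
  fixes a x y n :: nat
  assumes "(a + x) mod n = (a + y) mod n" "x < n" "y < n"
  shows "x = y"
  by (metis assms cong_add_lcancel_nat cong_def cong_less_modulus_unique_nat)

lemma Suc_mod_if: "(i::nat) < n \<Longrightarrow> Suc i mod n = (if Suc i = n then 0 else Suc i)"
  by auto

lemma pred_mod_if: "(j::nat) < n \<Longrightarrow> (j + n - 1) mod n = (if j = 0 then n - 1 else j - 1)"
  by (cases j) auto

lemma pred_mod_neq: "(j::nat) < n \<Longrightarrow> 2 \<le> n \<Longrightarrow> (j + n - 1) mod n \<noteq> j"
  by (cases j) (auto simp: pred_mod_if)

lemma Suc_add_pred_mod: "(j::nat) < n \<Longrightarrow> (a + 1 + (j + n - 1) mod n) mod n = (a + j) mod n"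
  by (cases j) (auto simp: pred_mod_if)

lemma Mn_iff: "(b, i, j) \<in> Mn n \<longleftrightarrow> i < n \<and> j < n"
  by (auto simp: Mn_def)

lemma finite_Mn: "finite (Mn n)"
  by (simp add: Mn_def)

lemma plus_e_distinct:
  assumes "n \<ge> 2" "x \<in> Mn n"
  shows "plus_e1 n x \<noteq> x" "plus_e2 n x \<noteq> x" "plus_e3 n x \<noteq> x"
    "plus_e1 n x \<noteq> plus_e2 n x" "plus_e1 n x \<noteq> plus_e3 n x" "plus_e2 n x \<noteq> plus_e3 n x"
proof -
  obtain b i j where x: "x = (b, i, j)" by (cases x)
  have "Suc i mod n \<noteq> i" "Suc j mod n \<noteq> j"
    using assms x by (auto simp: Mn_iff Suc_mod_if)
  then show "plus_e1 n x \<noteq> x" "plus_e2 n x \<noteq> x" "plus_e3 n x \<noteq> x"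
    "plus_e1 n x \<noteq> plus_e2 n x" "plus_e1 n x \<noteq> plus_e3 n x" "plus_e2 n x \<noteq> plus_e3 n x"
    by (auto simp: x)
qed

definition diag :: "nat \<Rightarrow> medge \<Rightarrow> nat" where
  "diag n x = (fst (snd x) + snd (snd x)) mod n"

definition diag_pos :: "medge \<Rightarrow> nat" where
  "diag_pos x = 2 * fst (snd x) + (if fst x then 1 else 0)"

definition diag_key :: "nat \<Rightarrow> medge \<Rightarrow> nat" where
  "diag_key n x = 2 * n * diag n x + diag_pos x"

lemma diag_less: "0 < n \<Longrightarrow> diag n x < n"
  by (simp add: diag_def)

lemma diag_pos_less: "x \<in> Mn n \<Longrightarrow> diag_pos x < 2 * n"
  by (cases x) (auto simp: diag_pos_def Mn_iff)

lemma eq_if_same_diag_pos: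
  assumes "x \<in> Mn n" "y \<in> Mn n" "diag n x = diag n y" "diag_pos x = diag_pos y"
  shows "x = y"
proof -
  obtain b i j b' i' j' where x: "x = (b, i, j)" and y: "y = (b', i', j')"
    by (cases x, cases y)
  have "b = b'" "i = i'"
    using assms(4) unfolding x y diag_pos_def by (auto split: if_splits) presburger+
  moreover have "j = j'"
    using assms(1-3) \<open>i = i'\<close> add_mod_cancel_left_nat[of i j n j']
    unfolding x y diag_def Mn_iff by simp
  ultimately show ?thesis using x y by simp
qed

lemma mult_add_less_mult_add_iff:
  fixes a b c d m :: nat
  assumes "b < m" "d < m"
  shows "m * a + b < m * c + d \<longleftrightarrow> a < c \<or> (a = c \<and> b < d)"
proof -
  have less: "m * a + b < m * c + d" if "a < c" "b < m" for a b c d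
  proof -
    have "m * a + b < m * Suc a" using that by simp
    also have "\<dots> \<le> m * c" using that by (intro mult_le_mono2) simp
    finally show ?thesis by simp
  qed
  show ?thesis
    using less[of a c b d] less[of c a d b] assms by (cases a c rule: linorder_cases) auto
qed

lemma diag_key_less_iff:
  assumes "x \<in> Mn n" "y \<in> Mn n"
  shows "diag_key n x < diag_key n y \<longleftrightarrow>
    diag n x < diag n y \<or> (diag n x = diag n y \<and> diag_pos x < diag_pos y)"
  using mult_add_less_mult_add_iff[of "diag_pos x" "2 * n" "diag_pos y"] diag_pos_less assms
  unfolding diag_key_def by auto

lemma inj_on_diag_key: "inj_on (diag_key n) (Mn n)"
proof (rule inj_onI)
  fix x y assume xy: "x \<in> Mn n" "y \<in> Mn n" "diag_key n x = diag_key n y"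
  then have "diag n x = diag n y" "diag_pos x = diag_pos y"
    using diag_key_less_iff[OF xy(1,2)] diag_key_less_iff[OF xy(2,1)] by auto
  then show "x = y" using eq_if_same_diag_pos xy by auto
qed

section \<open>Snake configurations\<close>

locale snake_config =
  fixes n :: nat and \<rho> :: "medge \<Rightarrow> medge"
  assumes n_ge_2: "n \<ge> 2" and rho_GS: "\<rho> \<in> GS n"
begin

lemma permutes_Mn: "\<rho> permutes Mn n"
  using rho_GS by (simp add: GS_def)

lemma rho_in_Mn: "x \<in> Mn n \<Longrightarrow> \<rho> x \<in> Mn n"
  using permutes_Mn by (simp add: permutes_in_image)

lemma rho_eq_iff: "\<rho> x = \<rho> y \<longleftrightarrow> x = y"
  using permutes_Mn by (simp add: permutes_inj[THEN inj_eq])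

lemma rho_cases:
  assumes "x \<in> Mn n"
  obtains (fixed) "\<rho> x = x"
    | (black_e1) "fst x" "\<rho> x = plus_e1 n x" | (black_e3) "fst x" "\<rho> x = plus_e3 n x"
    | (white_e2) "\<not> fst x" "\<rho> x = plus_e2 n x" | (white_e3) "\<not> fst x" "\<rho> x = plus_e3 n x"
proof -
  have "if fst x then \<rho> x \<in> {x, plus_e3 n x, plus_e1 n x} else \<rho> x \<in> {x, plus_e3 n x, plus_e2 n x}"
    using rho_GS assms unfolding GS_def is_black_def by blast
  then show ?thesis using that by (auto split: if_splits)
qed

definition Moved :: "medge set" where
  "Moved = {x \<in> Mn n. \<rho> x \<noteq> x}"

lemma finite_Moved: "finite Moved"
  using finite_Mn by (simp add: Moved_def)

lemma Moved_in_Mn: "x \<in> Moved \<Longrightarrow> x \<in> Mn n"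
  by (simp add: Moved_def)

lemma permutes_Moved: "\<rho> permutes Moved"
  using permutes_Mn unfolding permutes_def Moved_def by blast

lemma rho_in_Moved: "x \<in> Moved \<Longrightarrow> \<rho> x \<in> Moved"
  using permutes_Moved by (simp add: permutes_in_image)

lemma diag_rho:
  assumes "x \<in> Moved"
  shows "diag n (\<rho> x) = Suc (diag n x) mod n"
proof -
  obtain b i j where x: "x = (b, i, j)" by (cases x)
  have "x \<in> Mn n" "\<rho> x \<noteq> x" using assms by (auto simp: Moved_def)
  then show ?thesis
    by (cases rule: rho_cases) (auto simp: x diag_def mod_Suc_eq mod_add_left_eq mod_add_right_eq)
qed

text \<open>The only moves that decrease the position along the diagonal.\<close>
definition wraps :: "medge \<Rightarrow> bool" where
  "wraps x \<longleftrightarrow> \<rho> x \<noteq> x \<and> fst x \<and> fst (snd x) = n - 1"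

definition Wraps :: "medge set" where
  "Wraps = {x \<in> Mn n. wraps x}"

definition pos_shift :: "medge \<Rightarrow> nat" where
  "pos_shift x = (if \<rho> x = plus_e1 n x then 2 else if \<rho> x = plus_e3 n x then 1 else 0)"

lemma Wraps_subset_Moved: "Wraps \<subseteq> Moved"
  by (auto simp: Wraps_def wraps_def Moved_def)

lemma diag_pos_rho:
  assumes "x \<in> Mn n"
  shows "diag_pos (\<rho> x) + (if wraps x then 2 * n else 0) = diag_pos x + pos_shift x"
proof -
  obtain b i j where x: "x = (b, i, j)" by (cases x)
  have "i < n" using assms by (simp add: x Mn_iff)
  from assms show ?thesis
    using plus_e_distinct[OF n_ge_2 assms] n_ge_2 \<open>i < n\<close>
    by (cases rule: rho_cases) (auto simp: x wraps_def pos_shift_def diag_pos_def Suc_mod_if)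
qed

definition Moved_on_diag :: "nat \<Rightarrow> medge set" where
  "Moved_on_diag d = {x \<in> Moved. diag n x = d}"

lemma bij_betw_Moved_on_diag:
  assumes "d < n"
  shows "bij_betw \<rho> (Moved_on_diag d) (Moved_on_diag (Suc d mod n))"
proof (rule bij_betw_imageI)
  show "inj_on \<rho> (Moved_on_diag d)" by (simp add: inj_on_def rho_eq_iff)
  have shift: "diag n (\<rho> x) = Suc d mod n \<longleftrightarrow> diag n x = d" if "x \<in> Moved" for x
    using diag_rho[OF that] add_mod_cancel_left_nat[of 1 "diag n x" n d] diag_less[of n x]
      assms n_ge_2 by auto
  show "\<rho> ` Moved_on_diag d = Moved_on_diag (Suc d mod n)"
  proof (intro equalityI subsetI)
    fix y assume "y \<in> \<rho> ` Moved_on_diag d"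
    then show "y \<in> Moved_on_diag (Suc d mod n)"
      using shift rho_in_Moved by (auto simp: Moved_on_diag_def)
  next
    fix y assume y: "y \<in> Moved_on_diag (Suc d mod n)"
    then have "y \<in> \<rho> ` Moved"
      using permutes_image[OF permutes_Moved] by (simp add: Moved_on_diag_def)
    then obtain x where "x \<in> Moved" "y = \<rho> x" by blast
    then show "y \<in> \<rho> ` Moved_on_diag d" using y shift by (auto simp: Moved_on_diag_def)
  qed
qed

definition diag_card :: nat where
  "diag_card = card (Moved_on_diag 0)"

lemma card_Moved_on_diag: "d < n \<Longrightarrow> card (Moved_on_diag d) = diag_card"
proof (induction d)
  case 0
  then show ?case by (simp add: diag_card_def)
next
  case (Suc d)
  then show ?case using bij_betw_same_card[OF bij_betw_Moved_on_diag[of d]] by simp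
qed

lemma card_Moved: "card Moved = n * diag_card"
proof -
  have "Moved = (\<Union>d<n. Moved_on_diag d)"
    using diag_less n_ge_2 by (auto simp: Moved_on_diag_def)
  moreover have "card (\<Union>d<n. Moved_on_diag d) = (\<Sum>d<n. card (Moved_on_diag d))"
    by (rule card_UN_disjoint) (auto simp: Moved_on_diag_def finite_Moved)
  ultimately show ?thesis using card_Moved_on_diag by simp
qed

lemma cnt_sum_eq_card_Moved: "cntA n \<rho> + cntB n \<rho> + cntC n \<rho> = card Moved"
proof -
  have "(if \<rho> x \<noteq> x then 1 else 0) = (if \<rho> x = plus_e1 n x then 1 else 0)
      + (if \<rho> x = plus_e2 n x then 1 else 0) + (if \<rho> x = plus_e3 n x then (1::nat) else 0)"
    if "x \<in> Mn n" for x
    using that plus_e_distinct[OF n_ge_2 that] by (cases rule: rho_cases) auto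
  then have "(\<Sum>x\<in>Mn n. if \<rho> x \<noteq> x then 1 else 0) = (\<Sum>x\<in>Mn n. (if \<rho> x = plus_e1 n x then 1 else 0)
      + (if \<rho> x = plus_e2 n x then 1 else 0) + (if \<rho> x = plus_e3 n x then (1::nat) else 0))"
    by (rule sum.cong[OF refl])
  then show ?thesis
    by (simp add: sum.distrib finite_Mn cntA_def cntB_def cntC_def Moved_def flip: sum.inter_filter)
qed

text \<open>Summing \<open>diag_pos_rho\<close> over the permutation \<open>\<rho>\<close> of \<open>Mn n\<close>: the positions
  cancel, leaving the total shift \<open>2 A + C\<close> against the wrap-around corrections.\<close>
lemma cntA_cntC_eq_card_Wraps: "2 * cntA n \<rho> + cntC n \<rho> = 2 * n * card Wraps"
proof -
  have "(\<Sum>x\<in>Mn n. diag_pos (\<rho> x)) = (\<Sum>x\<in>Mn n. diag_pos x)"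
    using sum.reindex_bij_betw[OF permutes_imp_bij[OF permutes_Mn], of diag_pos] by simp
  moreover have "(\<Sum>x\<in>Mn n. diag_pos (\<rho> x) + (if wraps x then 2 * n else 0))
      = (\<Sum>x\<in>Mn n. diag_pos x + pos_shift x)"
    using diag_pos_rho by (rule sum.cong[OF refl])
  ultimately have "(\<Sum>x\<in>Mn n. if wraps x then 2 * n else 0) = (\<Sum>x\<in>Mn n. pos_shift x)"
    by (simp add: sum.distrib)
  moreover have "(\<Sum>x\<in>Mn n. if wraps x then 2 * n else 0) = 2 * n * card Wraps"
    by (simp add: finite_Mn Wraps_def flip: sum.inter_filter)
  moreover have "pos_shift x = 2 * (if \<rho> x = plus_e1 n x then 1 else 0)
      + (if \<rho> x = plus_e3 n x then 1 else 0)" if "x \<in> Mn n" for x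
    using plus_e_distinct[OF n_ge_2 that] by (auto simp: pos_shift_def)
  then have "(\<Sum>x\<in>Mn n. pos_shift x) = 2 * cntA n \<rho> + cntC n \<rho>"
    by (simp add: sum.distrib finite_Mn cntA_def cntC_def flip: sum_distrib_left sum.inter_filter
        cong: sum.cong)
  ultimately show ?thesis by simp
qed

lemma card_Wraps_le: "card Wraps \<le> diag_card"
proof -
  have "2 * n * card Wraps \<le> 2 * n * diag_card"
    using cnt_sum_eq_card_Moved cntA_cntC_eq_card_Wraps card_Moved by linarith
  then show ?thesis using n_ge_2 by simp
qed

lemma cntB_cntC_eq_diag_card_diff: "2 * cntB n \<rho> + cntC n \<rho> = 2 * n * (diag_card - card Wraps)"
  using cnt_sum_eq_card_Moved cntA_cntC_eq_card_Wraps card_Moved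
  by (simp add: diff_mult_distrib2)

lemma diag_pos_rho_nowrap: "x \<in> Mn n \<Longrightarrow> \<not> wraps x \<Longrightarrow> diag_pos (\<rho> x) = diag_pos x + pos_shift x"
  using diag_pos_rho[of x] by simp

lemma diag_pos_wraps: "x \<in> Mn n \<Longrightarrow> wraps x \<Longrightarrow> diag_pos x = 2 * n - 1"
  by (cases x) (auto simp: wraps_def diag_pos_def Mn_iff)

lemma pos_shift_le: "pos_shift x \<le> 2"
  by (simp add: pos_shift_def)

lemma pos_shift_2:
  assumes "x \<in> Moved" "pos_shift x = 2"
  shows "fst x" "\<rho> x = plus_e1 n x"
proof -
  have x: "x \<in> Mn n" "\<rho> x \<noteq> x" using assms(1) by (auto simp: Moved_def)
  show e1: "\<rho> x = plus_e1 n x" using assms(2) by (auto simp: pos_shift_def split: if_splits)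
  show "fst x" using x e1 plus_e_distinct[OF n_ge_2 x(1)] by (cases rule: rho_cases) auto
qed

lemma pos_shift_0:
  assumes "x \<in> Moved" "pos_shift x = 0"
  shows "\<not> fst x" "\<rho> x = plus_e2 n x"
proof -
  have x: "x \<in> Mn n" "\<rho> x \<noteq> x" using assms(1) by (auto simp: Moved_def)
  have "\<rho> x \<noteq> plus_e1 n x" "\<rho> x \<noteq> plus_e3 n x"
    using assms(2) by (auto simp: pos_shift_def split: if_splits)
  then show "\<not> fst x" "\<rho> x = plus_e2 n x" using x by (auto elim: rho_cases)
qed

definition Inv :: "(medge \<times> medge) set" where
  "Inv = inversions (diag_key n) Moved \<rho>"

definition Inv_same :: "(medge \<times> medge) set" where
  "Inv_same = {z \<in> Inv. diag n (fst z) = diag n (snd z)}"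

definition Inv_cross :: "(medge \<times> medge) set" where
  "Inv_cross = {z \<in> Inv. diag n (fst z) \<noteq> diag n (snd z)}"

lemma sign_eq_card_Inv: "sign \<rho> = (-1::int) ^ card Inv"
  unfolding Inv_def
  by (rule sign_eq_inversions[OF finite_Moved inj_on_subset[OF inj_on_diag_key] permutes_Moved])
    (auto simp: Moved_def)

lemma Inv_iff:
  "(x, y) \<in> Inv \<longleftrightarrow> x \<in> Moved \<and> y \<in> Moved \<and>
     diag_key n x < diag_key n y \<and> diag_key n (\<rho> y) < diag_key n (\<rho> x)"
  by (auto simp: Inv_def inversions_def ordered_pairs_def)

lemma Inv_same_iff:
  "(x, y) \<in> Inv_same \<longleftrightarrow> x \<in> Moved \<and> y \<in> Moved \<and> diag n x = diag n y \<and>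
     diag_pos x < diag_pos y \<and> diag_pos (\<rho> y) < diag_pos (\<rho> x)"
proof (cases "x \<in> Moved \<and> y \<in> Moved \<and> diag n x = diag n y")
  case True
  then have "x \<in> Mn n" "y \<in> Mn n" "\<rho> x \<in> Mn n" "\<rho> y \<in> Mn n"
    "diag n (\<rho> x) = diag n (\<rho> y)"
    using Moved_in_Mn rho_in_Moved diag_rho by auto
  then show ?thesis using True diag_key_less_iff by (auto simp: Inv_same_def Inv_iff)
qed (auto simp: Inv_same_def Inv_iff)

lemma card_Inv_split: "card Inv = card Inv_same + card Inv_cross"
proof -
  have "finite Inv"
    by (rule finite_subset[of _ "Moved \<times> Moved"]) (auto simp: Inv_iff finite_Moved)
  moreover have "Inv = Inv_same \<union> Inv_cross" "Inv_same \<inter> Inv_cross = {}"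
    by (auto simp: Inv_same_def Inv_cross_def)
  ultimately show ?thesis by (simp add: card_Un_disjoint)
qed

lemma Inv_cross_eq: "Inv_cross = (Moved - Moved_on_diag (n - 1)) \<times> Moved_on_diag (n - 1)"
proof (rule set_eqI)
  fix z :: "medge \<times> medge"
  obtain x y where z: "z = (x, y)" by (cases z)
  show "z \<in> Inv_cross \<longleftrightarrow> z \<in> (Moved - Moved_on_diag (n - 1)) \<times> Moved_on_diag (n - 1)"
  proof (cases "x \<in> Moved \<and> y \<in> Moved")
    case True
    then have Mn: "x \<in> Mn n" "y \<in> Mn n" "\<rho> x \<in> Mn n" "\<rho> y \<in> Mn n"
      using Moved_in_Mn rho_in_Moved by auto
    have lt: "diag n x < n" "diag n y < n" using diag_less n_ge_2 by auto
    have rho: "diag n (\<rho> x) = Suc (diag n x) mod n" "diag n (\<rho> y) = Suc (diag n y) mod n"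
      using True diag_rho by auto
    show ?thesis
    proof
      assume "z \<in> Inv_cross"
      then have "diag n x \<noteq> diag n y" "diag_key n x < diag_key n y"
        "diag_key n (\<rho> y) < diag_key n (\<rho> x)"
        using z by (auto simp: Inv_cross_def Inv_iff)
      then have "diag n x < diag n y" "diag n (\<rho> y) \<le> diag n (\<rho> x)"
        using diag_key_less_iff[OF Mn(1,2)] diag_key_less_iff[OF Mn(4,3)] by auto
      then have "diag n y = n - 1" using lt rho by (auto simp: Suc_mod_if split: if_splits)
      then show "z \<in> (Moved - Moved_on_diag (n - 1)) \<times> Moved_on_diag (n - 1)"
        using z True \<open>diag n x < diag n y\<close> by (auto simp: Moved_on_diag_def)
    next
      assume "z \<in> (Moved - Moved_on_diag (n - 1)) \<times> Moved_on_diag (n - 1)"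
      then have "diag n y = n - 1" "diag n x \<noteq> n - 1" using z by (auto simp: Moved_on_diag_def)
      then have "diag n x < diag n y" "diag n (\<rho> y) = 0" "diag n (\<rho> x) = Suc (diag n x)"
        using lt rho n_ge_2 by (auto simp: Suc_mod_if)
      then show "z \<in> Inv_cross"
        using z True diag_key_less_iff[OF Mn(1,2)] diag_key_less_iff[OF Mn(4,3)]
        by (auto simp: Inv_cross_def Inv_iff)
    qed
  qed (auto simp: z Inv_cross_def Inv_iff Moved_on_diag_def)
qed

lemma card_Inv_cross: "card Inv_cross = (n - 1) * diag_card * diag_card"
proof -
  have "Moved_on_diag (n - 1) \<subseteq> Moved" by (auto simp: Moved_on_diag_def)
  moreover have "card (Moved_on_diag (n - 1)) = diag_card"
    using card_Moved_on_diag n_ge_2 by simp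
  ultimately have "card (Moved - Moved_on_diag (n - 1)) = (n - 1) * diag_card"
    using card_Moved finite_Moved by (simp add: card_Diff_subset finite_subset diff_mult_distrib)
  then show ?thesis
    unfolding Inv_cross_eq card_cartesian_product
    using \<open>card (Moved_on_diag (n - 1)) = diag_card\<close> by simp
qed

definition Crossings :: "(nat \<times> nat) set" where
  "Crossings = {(i, j) \<in> {0..<n} \<times> {0..<n}.
     \<rho> (True, (i + n - 1) mod n, j) = (True, i, j) \<and> \<rho> (False, i, (j + n - 1) mod n) = (False, i, j)}"

definition Crossings_seam :: "(nat \<times> nat) set" where
  "Crossings_seam = {v \<in> Crossings. fst v = 0}"

definition Crossings_inner :: "(nat \<times> nat) set" where
  "Crossings_inner = {v \<in> Crossings. fst v \<noteq> 0}"

lemma crossings_eq_card_seam_inner: "crossings n \<rho> = card Crossings_seam + card Crossings_inner"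
proof -
  have "finite Crossings"
    unfolding Crossings_def by (rule finite_subset[of _ "{0..<n} \<times> {0..<n}"]) auto
  moreover have "Crossings = Crossings_seam \<union> Crossings_inner"
    "Crossings_seam \<inter> Crossings_inner = {}"
    by (auto simp: Crossings_seam_def Crossings_inner_def)
  moreover have "crossings n \<rho> = card Crossings" by (simp add: crossings_def Crossings_def)
  ultimately show ?thesis by (simp add: card_Un_disjoint)
qed

text \<open>A crossing at \<open>v\<close> consists of the two mid-edges entering \<open>v\<close>; they are
  adjacent on a common diagonal and \<open>\<rho>\<close> swaps their order.\<close>
definition crossing_pair :: "nat \<times> nat \<Rightarrow> medge \<times> medge" where
  "crossing_pair v =
     ((True, (fst v + n - 1) mod n, snd v), (False, fst v, (snd v + n - 1) mod n))"

definition Inv_same_nowrap :: "(medge \<times> medge) set" where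
  "Inv_same_nowrap = {z \<in> Inv_same. \<not> wraps (snd z)}"

definition Inv_same_wrap :: "(medge \<times> medge) set" where
  "Inv_same_wrap = {z \<in> Inv_same. wraps (snd z)}"

lemma card_Inv_same: "card Inv_same = card Inv_same_nowrap + card Inv_same_wrap"
proof -
  have "finite Inv_same"
    by (rule finite_subset[of _ "Moved \<times> Moved"]) (auto simp: Inv_same_iff finite_Moved)
  moreover have "Inv_same = Inv_same_nowrap \<union> Inv_same_wrap"
    "Inv_same_nowrap \<inter> Inv_same_wrap = {}"
    by (auto simp: Inv_same_nowrap_def Inv_same_wrap_def)
  ultimately show ?thesis by (simp add: card_Un_disjoint)
qed

text \<open>Without wrap-around the positions increase by \<open>pos_shift \<in> {0, 1, 2}\<close>, so an
  inversion needs adjacent positions, shifts \<open>2\<close> and \<open>0\<close>: a black \<open>e1\<close>-step and a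
  white \<open>e2\<close>-step into the same vertex.\<close>
lemma Inv_same_nowrap_subset: "Inv_same_nowrap \<subseteq> crossing_pair ` Crossings_inner"
proof
  fix z assume z: "z \<in> Inv_same_nowrap"
  obtain x y where xy: "z = (x, y)" by (cases z)
  have A: "x \<in> Moved" "y \<in> Moved" "diag n x = diag n y" "diag_pos x < diag_pos y"
    "diag_pos (\<rho> y) < diag_pos (\<rho> x)" "\<not> wraps y"
    using z xy by (auto simp: Inv_same_nowrap_def Inv_same_iff)
  have Mn: "x \<in> Mn n" "y \<in> Mn n" using A Moved_in_Mn by auto
  have "\<not> wraps x" using diag_pos_wraps[OF Mn(1)] diag_pos_less[OF Mn(2)] A by auto
  then have "diag_pos (\<rho> x) = diag_pos x + pos_shift x" "diag_pos (\<rho> y) = diag_pos y + pos_shift y"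
    using diag_pos_rho_nowrap Mn A(6) by auto
  then have shifts: "pos_shift x = 2" "pos_shift y = 0" "diag_pos y = diag_pos x + 1"
    using A pos_shift_le[of x] pos_shift_le[of y] by linarith+
  obtain i j where x: "x = (True, i, j)" using pos_shift_2[OF A(1) shifts(1)] by (cases x) auto
  obtain i' j' where y: "y = (False, i', j')" using pos_shift_0[OF A(2) shifts(2)] by (cases y) auto
  have ij: "i < n" "j < n" "i' < n" "j' < n" using Mn x y by (auto simp: Mn_iff)
  have i': "i' = i + 1" using shifts(3) x y by (simp add: diag_pos_def)
  have "(i + 1 + (j + n - 1) mod n) mod n = (i + 1 + j') mod n"
    using Suc_add_pred_mod[OF ij(2), of i] A(3) x y i' by (simp add: diag_def)
  then have j': "j' = (j + n - 1) mod n"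
    using add_mod_cancel_left_nat[of "i + 1" "(j + n - 1) mod n" n j'] ij n_ge_2 by simp
  have "\<rho> (True, i, j) = (True, i + 1, j)" using pos_shift_2[OF A(1) shifts(1)] x ij i' by simp
  moreover have "\<rho> (False, i + 1, (j + n - 1) mod n) = (False, i + 1, j)"
    using pos_shift_0[OF A(2) shifts(2)] Suc_add_pred_mod[OF ij(2), of 0] y i' j' ij by simp
  ultimately have "(i + 1, j) \<in> Crossings_inner"
    using ij i' Mn y by (simp add: Crossings_inner_def Crossings_def Mn_iff)
  moreover have "z = crossing_pair (i + 1, j)" using xy x y i' j' ij by (simp add: crossing_pair_def)
  ultimately show "z \<in> crossing_pair ` Crossings_inner" by blast
qed

lemma crossing_pair_in_Inv_same_nowrap:
  assumes "v \<in> Crossings_inner"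
  shows "crossing_pair v \<in> Inv_same_nowrap"
proof -
  obtain i j where v: "v = (i, j)" by (cases v)
  have ij: "i < n" "j < n" "i \<noteq> 0" using assms v by (auto simp: Crossings_inner_def Crossings_def)
  have i_pred: "(i + n - 1) mod n = i - 1" using pred_mod_if[OF ij(1)] ij(3) by simp
  have rho: "\<rho> (True, i - 1, j) = (True, i, j)" "\<rho> (False, i, (j + n - 1) mod n) = (False, i, j)"
    using assms v i_pred by (auto simp: Crossings_inner_def Crossings_def)
  have "(j + n - 1) mod n \<noteq> j" using pred_mod_neq ij n_ge_2 by simp
  then have "(True, i - 1, j) \<in> Moved" "(False, i, (j + n - 1) mod n) \<in> Moved"
    using rho ij by (auto simp: Moved_def Mn_iff)
  moreover have "diag n (True, i - 1, j) = diag n (False, i, (j + n - 1) mod n)"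
    using Suc_add_pred_mod[OF ij(2), of "i - 1"] ij by (simp add: diag_def)
  moreover have "crossing_pair v = ((True, i - 1, j), (False, i, (j + n - 1) mod n))"
    using v i_pred by (simp add: crossing_pair_def)
  ultimately show ?thesis
    using rho ij by (auto simp: Inv_same_nowrap_def Inv_same_iff diag_pos_def wraps_def)
qed

lemma card_Inv_same_nowrap: "card Inv_same_nowrap = card Crossings_inner"
proof -
  have "Inv_same_nowrap = crossing_pair ` Crossings_inner"
    using Inv_same_nowrap_subset crossing_pair_in_Inv_same_nowrap by blast
  moreover have "inj_on crossing_pair Crossings_inner"
    by (auto simp: inj_on_def crossing_pair_def)
  ultimately show ?thesis by (simp add: card_image)
qed

definition Wrap_pairs :: "(medge \<times> medge) set" where
  "Wrap_pairs = {(x, y). y \<in> Wraps \<and> x \<in> Moved \<and> diag n x = diag n y \<and> x \<noteq> y}"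

definition seam_pair :: "nat \<times> nat \<Rightarrow> medge \<times> medge" where
  "seam_pair v = ((False, 0, (snd v + n - 1) mod n), (True, n - 1, snd v))"

lemma card_Wrap_pairs: "card Wrap_pairs = card Wraps * (diag_card - 1)"
proof -
  have "Wrap_pairs = (\<lambda>(y, x). (x, y)) ` (SIGMA y:Wraps. Moved_on_diag (diag n y) - {y})"
    by (auto simp: Wrap_pairs_def Moved_on_diag_def Wraps_def Moved_def image_iff)
  moreover have "inj_on (\<lambda>(y, x). (x, y)) (SIGMA y:Wraps. Moved_on_diag (diag n y) - {y})"
    by (auto simp: inj_on_def)
  ultimately have "card Wrap_pairs = card (SIGMA y:Wraps. Moved_on_diag (diag n y) - {y})"
    by (simp add: card_image)
  also have "\<dots> = (\<Sum>y\<in>Wraps. card (Moved_on_diag (diag n y) - {y}))"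
    by (rule card_SigmaI) (auto simp: Wraps_def finite_Mn Moved_on_diag_def finite_Moved)
  also have "\<dots> = (\<Sum>y\<in>Wraps. diag_card - 1)"
  proof (rule sum.cong[OF refl])
    fix y assume "y \<in> Wraps"
    then have "y \<in> Moved_on_diag (diag n y)" using Wraps_subset_Moved by (auto simp: Moved_on_diag_def)
    moreover have "finite (Moved_on_diag (diag n y))" using finite_Moved by (simp add: Moved_on_diag_def)
    ultimately show "card (Moved_on_diag (diag n y) - {y}) = diag_card - 1"
      using card_Moved_on_diag[OF diag_less] n_ge_2 by simp
  qed
  finally show ?thesis by simp
qed

lemma seam_crossing_rho:
  assumes "(i, j) \<in> Crossings_seam"
  shows "i = 0" "j < n" "\<rho> (True, n - 1, j) = (True, 0, j)"
    "\<rho> (False, 0, (j + n - 1) mod n) = (False, 0, j)"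
proof -
  show "i = 0" "j < n" using assms by (auto simp: Crossings_seam_def Crossings_def)
  moreover have "(0 + n - 1) mod n = n - 1" using n_ge_2 by simp
  ultimately show "\<rho> (True, n - 1, j) = (True, 0, j)" "\<rho> (False, 0, (j + n - 1) mod n) = (False, 0, j)"
    using assms by (auto simp: Crossings_seam_def Crossings_def)
qed

lemma seam_pair_in_Wrap_pairs:
  assumes "v \<in> Crossings_seam"
  shows "seam_pair v \<in> Wrap_pairs"
proof -
  obtain i j where v: "v = (i, j)" by (cases v)
  note rho = seam_crossing_rho[OF assms[unfolded v]]
  have "(True, n - 1, j) \<in> Wraps" using rho n_ge_2 by (auto simp: Wraps_def wraps_def Mn_iff)
  moreover have "(False, 0, (j + n - 1) mod n) \<in> Moved"
    using rho pred_mod_neq[OF rho(2) n_ge_2] by (auto simp: Moved_def Mn_iff)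
  moreover have "diag n (False, 0, (j + n - 1) mod n) = diag n (True, n - 1, j)"
    using n_ge_2 by (simp add: diag_def add.commute)
  ultimately show ?thesis by (simp add: v Wrap_pairs_def seam_pair_def)
qed

lemma seam_pair_notin_Inv_same:
  assumes "v \<in> Crossings_seam"
  shows "seam_pair v \<notin> Inv_same"
proof -
  obtain i j where v: "v = (i, j)" by (cases v)
  show ?thesis
    using seam_crossing_rho[OF assms[unfolded v]] by (simp add: v Inv_same_iff seam_pair_def diag_pos_def)
qed

lemma Inv_same_wrap_subset: "Inv_same_wrap \<subseteq> Wrap_pairs"
  using Moved_in_Mn by (auto simp: Inv_same_wrap_def Inv_same_iff Wrap_pairs_def Wraps_def)

text \<open>For wrapping \<open>y\<close> the image \<open>\<rho> y\<close> sits at position \<open>0\<close> or \<open>1\<close> of its diagonal,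
  so a pair \<open>(x, y)\<close> keeps its order only if \<open>\<rho> x\<close> is a white mid-edge at position \<open>0\<close>
  below the black \<open>\<rho> y\<close>: a crossing on the seam.\<close>
lemma Wrap_pair_noninv_is_seam_pair:
  assumes "(x, y) \<in> Wrap_pairs" "(x, y) \<notin> Inv_same_wrap"
  shows "(x, y) \<in> seam_pair ` Crossings_seam"
proof -
  have A: "y \<in> Wraps" "x \<in> Moved" "diag n x = diag n y" "x \<noteq> y"
    using assms(1) by (auto simp: Wrap_pairs_def)
  have y_Moved: "y \<in> Moved" using A Wraps_subset_Moved by auto
  have Mn: "x \<in> Mn n" "y \<in> Mn n" using A y_Moved Moved_in_Mn by auto
  have "wraps y" using A by (simp add: Wraps_def)
  then obtain j where y: "y = (True, n - 1, j)" by (cases y) (auto simp: wraps_def)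
  have j: "j < n" using Mn y by (simp add: Mn_iff)
  have "diag_pos x \<noteq> diag_pos y" using eq_if_same_diag_pos[OF Mn A(3)] A(4) by auto
  then have x_before: "diag_pos x < diag_pos y" and "\<not> wraps x"
    using diag_pos_wraps[OF Mn(2) \<open>wraps y\<close>] diag_pos_wraps[OF Mn(1)] diag_pos_less[OF Mn(1)]
    by auto
  then have px: "diag_pos (\<rho> x) = diag_pos x + pos_shift x" using diag_pos_rho_nowrap Mn by auto
  have ry: "\<rho> y = (True, 0, j) \<or> \<rho> y = (False, 0, j)"
    using Mn(2) y_Moved n_ge_2 by (cases rule: rho_cases) (auto simp: y Moved_def)
  have "diag n (\<rho> x) = diag n (\<rho> y)" using A(2,3) y_Moved diag_rho by simp
  moreover have "\<rho> x \<noteq> \<rho> y" using A(4) rho_eq_iff by simp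
  ultimately have "diag_pos (\<rho> x) \<noteq> diag_pos (\<rho> y)"
    using eq_if_same_diag_pos rho_in_Mn Mn by blast
  moreover have "\<not> diag_pos (\<rho> y) < diag_pos (\<rho> x)"
    using assms(2) A y_Moved x_before \<open>wraps y\<close> by (simp add: Inv_same_wrap_def Inv_same_iff)
  moreover have "diag_pos (\<rho> y) \<le> 1" using ry by (auto simp: diag_pos_def)
  ultimately have "diag_pos (\<rho> x) = 0" "\<rho> y = (True, 0, j)" using ry by (auto simp: diag_pos_def)
  then have "diag_pos x = 0" "pos_shift x = 0" using px by auto
  note x_e2 = pos_shift_0[OF A(2) this(2)]
  obtain j' where x: "x = (False, 0, j')"
    using \<open>diag_pos x = 0\<close> x_e2(1) by (cases x) (auto simp: diag_pos_def)
  have "j' < n" using Mn x by (simp add: Mn_iff)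
  moreover have "j' mod n = (n - 1 + j) mod n" using A(3) x y by (simp add: diag_def)
  ultimately have j': "j' = (j + n - 1) mod n" using n_ge_2 by (simp add: add.commute)
  have "\<rho> (False, 0, (j + n - 1) mod n) = (False, 0, j)"
    using x_e2(2) x j' Suc_add_pred_mod[OF j, of 0] j by simp
  then have "(0, j) \<in> Crossings_seam"
    using \<open>\<rho> y = (True, 0, j)\<close> y j n_ge_2 by (simp add: Crossings_seam_def Crossings_def)
  moreover have "(x, y) = seam_pair (0, j)" using x y j' by (simp add: seam_pair_def)
  ultimately show ?thesis by blast
qed

lemma card_Inv_same_wrap_add_seam: "card Inv_same_wrap + card Crossings_seam = card Wraps * (diag_card - 1)"
proof -
  have "Wrap_pairs = Inv_same_wrap \<union> seam_pair ` Crossings_seam"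
  proof (intro equalityI subsetI)
    fix z assume "z \<in> Wrap_pairs"
    then show "z \<in> Inv_same_wrap \<union> seam_pair ` Crossings_seam"
      using Wrap_pair_noninv_is_seam_pair[of "fst z" "snd z"] by auto
  next
    fix z assume "z \<in> Inv_same_wrap \<union> seam_pair ` Crossings_seam"
    then show "z \<in> Wrap_pairs" using Inv_same_wrap_subset seam_pair_in_Wrap_pairs by auto
  qed
  moreover have "Inv_same_wrap \<inter> seam_pair ` Crossings_seam = {}"
    using seam_pair_notin_Inv_same by (auto simp: Inv_same_wrap_def)
  moreover have "finite Wrap_pairs"
    by (rule finite_subset[of _ "Moved \<times> Moved"])
      (use Wraps_subset_Moved finite_Moved in \<open>auto simp: Wrap_pairs_def\<close>)
  moreover have "inj_on seam_pair Crossings_seam"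
    by (auto simp: inj_on_def seam_pair_def Crossings_seam_def)
  ultimately show ?thesis
    using card_Wrap_pairs by (simp add: card_Un_disjoint card_image)
qed

theorem sign_eq_crossings:
  "sign \<rho> = (-1) ^ (crossings n \<rho> + card Wraps * (diag_card - 1) + (n - 1) * diag_card * diag_card)"
proof -
  have "crossings n \<rho> + card Wraps * (diag_card - 1) + (n - 1) * diag_card * diag_card
      = card Inv + 2 * card Crossings_seam"
    using card_Inv_split card_Inv_same card_Inv_same_nowrap card_Inv_same_wrap_add_seam card_Inv_cross
      crossings_eq_card_seam_inner by simp
  then show ?thesis using sign_eq_card_Inv by (simp add: power_add power_mult)
qed

section \<open>The twisted weights\<close>

lemma Kth_rho:
  assumes "x \<in> Mn n"
  shows "Kth \<alpha> \<beta> \<gamma> n \<theta> x (\<rho> x) =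
    (if \<rho> x = plus_e1 n x
     then complex_of_real \<alpha> * exp (complex_of_real pi * \<i> * of_nat (fst \<theta>) / of_nat n) else 1) *
    (if \<rho> x = plus_e2 n x
     then complex_of_real \<beta> * exp (complex_of_real pi * \<i> * of_nat (snd \<theta>) / of_nat n) else 1) *
    (if \<rho> x = plus_e3 n x
     then complex_of_real \<gamma> * exp (complex_of_real pi * \<i> * of_nat (fst \<theta> + snd \<theta>) / (2 * of_nat n))
     else 1)"
  using assms plus_e_distinct[OF n_ge_2 assms]
  by (cases rule: rho_cases) (simp_all add: Kth_def is_black_def eq_commute[of x])

lemma prod_Kth_rho:
  "(\<Prod>x\<in>Mn n. Kth \<alpha> \<beta> \<gamma> n \<theta> x (\<rho> x)) =
    (complex_of_real \<alpha> * exp (complex_of_real pi * \<i> * of_nat (fst \<theta>) / of_nat n)) ^ cntA n \<rho> *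
    (complex_of_real \<beta> * exp (complex_of_real pi * \<i> * of_nat (snd \<theta>) / of_nat n)) ^ cntB n \<rho> *
    (complex_of_real \<gamma> * exp (complex_of_real pi * \<i> * of_nat (fst \<theta> + snd \<theta>) / (2 * of_nat n)))
      ^ cntC n \<rho>"
  by (simp add: Kth_rho prod.distrib finite_Mn cntA_def cntB_def cntC_def
      flip: prod.inter_filter cong: prod.cong)

end

text \<open>The three phases add up to \<open>\<pi> i (t\<^sub>1 (2 A + C) + t\<^sub>2 (2 B + C)) / (2 n)\<close>.\<close>
lemma twisted_monomial_eq:
  fixes A B C W k n t\<^sub>1 t\<^sub>2 :: nat and \<alpha> \<beta> \<gamma> :: real
  assumes "n > 0" and AC: "2 * A + C = 2 * n * W" and BC: "2 * B + C = 2 * n * k"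
  shows "(complex_of_real \<alpha> * exp (complex_of_real pi * \<i> * of_nat t\<^sub>1 / of_nat n)) ^ A *
      (complex_of_real \<beta> * exp (complex_of_real pi * \<i> * of_nat t\<^sub>2 / of_nat n)) ^ B *
      (complex_of_real \<gamma> * exp (complex_of_real pi * \<i> * of_nat (t\<^sub>1 + t\<^sub>2) / (2 * of_nat n))) ^ C
    = complex_of_real (\<alpha> ^ A * \<beta> ^ B * \<gamma> ^ C) * (-1) ^ (t\<^sub>1 * W + t\<^sub>2 * k)"
proof -
  define z where "z = complex_of_real pi * \<i>"
  have AC': "2 * of_nat A + of_nat C = (2 * of_nat n * of_nat W :: complex)"
    and BC': "2 * of_nat B + of_nat C = (2 * of_nat n * of_nat k :: complex)"
    using arg_cong[OF AC, of "of_nat :: nat \<Rightarrow> complex"] arg_cong[OF BC, of "of_nat :: nat \<Rightarrow> complex"]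
    by simp_all
  have "of_nat A * (z * of_nat t\<^sub>1 / of_nat n) + of_nat B * (z * of_nat t\<^sub>2 / of_nat n)
        + of_nat C * (z * of_nat (t\<^sub>1 + t\<^sub>2) / (2 * of_nat n))
      = z * (of_nat t\<^sub>1 * (2 * of_nat A + of_nat C) + of_nat t\<^sub>2 * (2 * of_nat B + of_nat C))
        / (2 * of_nat n)" (is "?e = _")
    using assms(1) by (simp add: field_simps)
  also have "\<dots> = of_nat (t\<^sub>1 * W + t\<^sub>2 * k) * z"
    unfolding AC' BC' using assms(1) by (simp add: field_simps)
  finally have exponent: "?e = of_nat (t\<^sub>1 * W + t\<^sub>2 * k) * z" .
  have "exp (of_nat A * (z * of_nat t\<^sub>1 / of_nat n)) * exp (of_nat B * (z * of_nat t\<^sub>2 / of_nat n))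
      * exp (of_nat C * (z * of_nat (t\<^sub>1 + t\<^sub>2) / (2 * of_nat n))) = exp (of_nat (t\<^sub>1 * W + t\<^sub>2 * k) * z)"
    unfolding exponent [symmetric] by (simp add: exp_add)
  also have "\<dots> = (-1) ^ (t\<^sub>1 * W + t\<^sub>2 * k)"
    unfolding exp_of_nat_mult z_def by simp
  finally show ?thesis
    unfolding z_def [symmetric]
    by (simp add: power_mult_distrib exp_of_nat_mult [symmetric] mult_ac)
qed

lemma sum_Cth_neg_one_pow:
  fixes n W k :: nat
  shows "(\<Sum>\<theta>\<in>{0,1} \<times> {0,1}. Cth n \<theta> * (-1) ^ (fst \<theta> * W + snd \<theta> * k))
       = (-1::complex) ^ ((W + n + 1) * (k + n + 1) + n + 1)"
proof -
  have "{0,1} \<times> {0,1} = {(0,0), (0,1), (1,0), (1,1::nat)}" by auto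
  then show ?thesis
    by (cases "even n"; cases "even W"; cases "even k") (simp_all add: Cth_def minus_one_power_iff)
qed

lemma even_snake_exponent_iff:
  fixes W k n :: nat
  assumes "n \<ge> 1"
  shows "even (W * (W + k - 1) + (n - 1) * (W + k) * (W + k)) \<longleftrightarrow>
    even ((W + n + 1) * (k + n + 1) + n + 1)"
proof (cases "W + k")
  case 0
  then show ?thesis by simp
next
  case (Suc m)
  then have "even m \<longleftrightarrow> \<not> (even W \<longleftrightarrow> even k)" by (metis even_Suc even_add)
  then show ?thesis
    using Suc assms by (cases "even W"; cases "even k"; cases "even n") (auto simp: even_mult_iff)
qed

theorem lemma3p3:
  fixes \<alpha> \<beta> \<gamma> :: real and n :: nat and \<rho> :: "medge \<Rightarrow> medge"
  assumes "\<alpha> > 0" and "\<beta> > 0" and "\<gamma> > 0" and "n \<ge> 2"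
    and "\<rho> \<in> GS n"
  shows "complex_of_real (weight \<alpha> \<beta> \<gamma> n \<rho>) =
    of_int (sign \<rho>) *
      (\<Sum>\<theta> \<in> {0,1} \<times> {0,1}. Cth n \<theta> * (\<Prod>x \<in> Mn n. Kth \<alpha> \<beta> \<gamma> n \<theta> x (\<rho> x)))"
proof -
  interpret snake_config n \<rho> using assms(4,5) by unfold_locales
  define W k where "W = card Wraps" and "k = diag_card - card Wraps"
  define monomial where "monomial = complex_of_real (\<alpha> ^ cntA n \<rho> * \<beta> ^ cntB n \<rho> * \<gamma> ^ cntC n \<rho>)"
  define \<Phi> where "\<Phi> = (W + n + 1) * (k + n + 1) + n + 1"
  have prod: "(\<Prod>x \<in> Mn n. Kth \<alpha> \<beta> \<gamma> n \<theta> x (\<rho> x)) = monomial * (-1) ^ (fst \<theta> * W + snd \<theta> * k)"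
    for \<theta>
    unfolding prod_Kth_rho monomial_def W_def k_def
    using twisted_monomial_eq[OF _ cntA_cntC_eq_card_Wraps cntB_cntC_eq_diag_card_diff] n_ge_2 by simp
  have "(\<Sum>\<theta> \<in> {0,1} \<times> {0,1}. Cth n \<theta> * (\<Prod>x \<in> Mn n. Kth \<alpha> \<beta> \<gamma> n \<theta> x (\<rho> x)))
      = monomial * (\<Sum>\<theta> \<in> {0,1} \<times> {0,1}. Cth n \<theta> * (-1) ^ (fst \<theta> * W + snd \<theta> * k))"
    (is "?sum = _")
    unfolding prod sum_distrib_left by (simp add: mult_ac)
  also have "\<dots> = monomial * (-1) ^ \<Phi>" by (simp only: sum_Cth_neg_one_pow \<Phi>_def)
  finally have sum: "?sum = monomial * (-1) ^ \<Phi>" .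
  have "diag_card = W + k" using card_Wraps_le by (simp add: W_def k_def)
  then have "(-1::complex) ^ (W * (diag_card - 1) + (n - 1) * diag_card * diag_card) = (-1) ^ \<Phi>"
    using even_snake_exponent_iff[of n W k] n_ge_2 by (simp add: \<Phi>_def minus_one_power_iff)
  then have sign: "of_int (sign \<rho>) = (-1) ^ crossings n \<rho> * (-1::complex) ^ \<Phi>"
    unfolding sign_eq_crossings W_def by (simp add: power_add mult.assoc)
  have "(-1::complex) ^ \<Phi> * (-1) ^ \<Phi> = 1" by (simp flip: power_add)
  then show ?thesis
    unfolding sign sum by (simp add: weight_def monomial_def mult_ac)
qed

end
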